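(* Let $P$ be a positroid on $[n]$ and let $\mathfrak{I}\subseteq\mathcal{P}([n])$ be the collection of all cyclic intervals of $[n]$. For integers $i\le j$ with $[i,j]\ne[n]$, $a_{\mathfrak{I}}([i,j])$ equals the $(i,j)$ entry (which is $0$ or $1$) of the affine permutation matrix of $P$.
   Context: A positroid of rank $k$ on $[n]$ is the matroid of a real $k\times n$ matrix of rank $k$ with all maximal minors nonnegative. For integers $i,j$, $[i,j]$ denotes the cyclic interval $\{i,i+1,\dots,j\}$ read modulo $n$ (empty if $j=i-1$). The cyclic rank matrix is $r_{ij}=\mathrm{rk}_P([i,j])$ for integers $i,j$ with $0\le j-i\le n$, with $r_{ij}=0$ when $i>j$. The affine permutation matrix has entry $1$ at $(i,j)$ if $r_{ij}=r_{i,j-1}=r_{i+1,j}\ne r_{i+1,j-1}$ and $0$ otherwise. For $S\in\mathfrak{I}$, $c(S)=\#S-\mathrm{rk}\,S$ and $a_{\mathfrak{I}}(S)=c(S)-\sum_{T\in\mathfrak{I},T\subsetneq S}a_{\mathfrak{I}}(T)$ recursively, with $a_{\mathfrak{I}}(\varnothing)=0$. *)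

theory Defs
  imports Complex_Main "HOL-Combinatorics.Permutations"
begin

text \<open>Ground set [n] = {1..n} (as integers). A k x n real matrix is a function
  A :: nat => int => real, rows 0..k-1, columns 1..n.\<close>

definition ground :: "nat \<Rightarrow> int set" where
  "ground n = {1..int n}"

text \<open>Cyclic interval [i,j] = {i,...,j} read modulo n (representatives 1..n);
  empty when j < i.\<close>
definition cyc_int :: "nat \<Rightarrow> int \<Rightarrow> int \<Rightarrow> int set" where
  "cyc_int n i j = {((m - 1) mod int n) + 1 | m. i \<le> m \<and> m \<le> j}"

definition cyc_intervals :: "nat \<Rightarrow> int set set" where
  "cyc_intervals n = {cyc_int n i j | i j. True}"

definition col_indep :: "nat \<Rightarrow> (nat \<Rightarrow> int \<Rightarrow> real) \<Rightarrow> int set \<Rightarrow> bool" where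
  "col_indep k A T \<longleftrightarrow> finite T \<and>
     (\<forall>c::int \<Rightarrow> real. (\<forall>r<k. (\<Sum>j\<in>T. c j * A r j) = 0) \<longrightarrow> (\<forall>j\<in>T. c j = 0))"

definition mat_rank :: "nat \<Rightarrow> (nat \<Rightarrow> int \<Rightarrow> real) \<Rightarrow> int set \<Rightarrow> nat" where
  "mat_rank k A S = Max {card T | T. T \<subseteq> S \<and> col_indep k A T}"

definition max_minor :: "nat \<Rightarrow> (nat \<Rightarrow> int \<Rightarrow> real) \<Rightarrow> int set \<Rightarrow> real" where
  "max_minor k A J = (\<Sum>p | p permutes {..<k}.
      of_int (sign p) * (\<Prod>r<k. A r (sorted_list_of_set J ! p r)))"

definition totally_nonneg_full_rank :: "nat \<Rightarrow> nat \<Rightarrow> (nat \<Rightarrow> int \<Rightarrow> real) \<Rightarrow> bool" where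
  "totally_nonneg_full_rank n k A \<longleftrightarrow> mat_rank k A (ground n) = k \<and>
     (\<forall>J. J \<subseteq> ground n \<and> card J = k \<longrightarrow> max_minor k A J \<ge> 0)"

definition is_positroid :: "nat \<Rightarrow> (int set \<Rightarrow> nat) \<Rightarrow> bool" where
  "is_positroid n rk \<longleftrightarrow> (\<exists>k A. totally_nonneg_full_rank n k A \<and>
      (\<forall>S. S \<subseteq> ground n \<longrightarrow> rk S = mat_rank k A S))"

text \<open>a_I(S) = c(S) - sum of a_I(T) over T in I with T a proper subset of S; a_I({}) = 0.
  (Only finite S are relevant; infinite S get the dummy value 0.)\<close>
function a_coef :: "'a set set \<Rightarrow> ('a set \<Rightarrow> int) \<Rightarrow> 'a set \<Rightarrow> int" where
  "a_coef I c S = (if S = {} \<or> infinite S then 0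
      else c S - (\<Sum>T\<in>{T\<in>I. T \<subset> S}. a_coef I c T))"
  by auto
termination
  by (relation "measure (\<lambda>(I, c, S). card S)") (auto intro: psubset_card_mono)

text \<open>Cyclic rank matrix r_ij = rk([i,j]) for i <= j; for j < i we use the
  convention r_ij = j - i + 1 (so r_{i,i-1} = 0, r_{i+1,i-1} = -1).\<close>
definition cyc_rank_matrix :: "nat \<Rightarrow> (int set \<Rightarrow> nat) \<Rightarrow> int \<Rightarrow> int \<Rightarrow> int" where
  "cyc_rank_matrix n rk i j = (if i \<le> j then int (rk (cyc_int n i j)) else j - i + 1)"

definition aff_perm_entry :: "nat \<Rightarrow> (int set \<Rightarrow> nat) \<Rightarrow> int \<Rightarrow> int \<Rightarrow> int" where
  "aff_perm_entry n rk i j =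
     (let r = cyc_rank_matrix n rk in
      if r i j = r i (j - 1) \<and> r i (j - 1) = r (i + 1) j \<and> r (i + 1) j \<noteq> r (i + 1) (j - 1)
      then 1 else 0)"

end

theory Submission
  imports Defs "HOL-Library.Function_Algebras"
begin

text \<open>The cyclic intervals strictly inside a proper cyclic interval [i,j] are the empty set and
  the intervals [x,y] with i \<le> x \<le> y \<le> j. So the recursion defining a_I is Moebius inversion
  over this triangle, and a_I([i,j]) is the second difference c[i,j] - c[i+1,j] - c[i,j-1] + c[i+1,j-1].
  The cardinalities cancel in it, leaving r(i+1,j) + r(i,j-1) - r(i,j) - r(i+1,j-1). Write
  [i,j] = X \<union> {e,f} with X = [i+1,j-1] and read ranks as dimensions of column spans: the
  difference is 1 exactly when f lies outside span X but inside span (X \<union> {e}), which forces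
  e outside span X; this is the rank pattern defining a 1 of the affine permutation matrix.\<close>

section \<open>Ranks of column sets as dimensions\<close>

lemma (in vector_space) dim_insert_finite:
  assumes "finite V"
  shows "dim (insert x V) = (if x \<in> span V then dim V else Suc (dim V))"
proof (cases "x \<in> span V")
  case True
  then show ?thesis by (metis span_redundant span_eq_dim)
next
  case False
  obtain B where B: "B \<subseteq> V" "independent B" "V \<subseteq> span B" "card B = dim V"
    by (rule basis_exists)
  have "x \<notin> span B" using False span_mono[OF B(1)] by blast
  then have "independent (insert x B)" "x \<notin> B"
    using B(2) independent_insertI span_base by auto
  moreover have "insert x V \<subseteq> span (insert x B)"
    using B(3) span_mono[of B "insert x B"] span_base[of x "insert x B"] by blast
  moreover have "finite B" using B(1) assms finite_subset by blast
  ultimately have "dim (insert x V) = Suc (card B)"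
    using B(1) by (intro dim_unique[of "insert x B"]) auto
  then show ?thesis using False B(4) by simp
qed

lemma (in vector_space) dim_insert_second_difference:
  fixes e f :: 'b
  assumes "finite V"
  defines "r \<equiv> dim V" and "re \<equiv> dim (insert e V)" and "rf \<equiv> dim (insert f V)"
    and "ref \<equiv> dim (insert e (insert f V))"
  shows "int re + int rf - int ref - int r = (if ref = re \<and> re = rf \<and> rf \<noteq> r then 1 else 0)"
proof -
  have "ref = dim (insert f (insert e V))" unfolding ref_def by (simp add: insert_commute)
  then have ref: "ref = (if f \<in> span (insert e V) then re else Suc re)"
    using assms(1) by (simp add: re_def dim_insert_finite)
  have re: "re = (if e \<in> span V then r else Suc r)" and rf: "rf = (if f \<in> span V then r else Suc r)"
    using assms(1) by (simp_all add: r_def re_def rf_def dim_insert_finite)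
  have "f \<in> span V \<Longrightarrow> f \<in> span (insert e V)" using span_mono[of V "insert e V"] by blast
  moreover have "e \<in> span V \<Longrightarrow> span (insert e V) = span V" by (rule span_redundant)
  ultimately show ?thesis using ref re rf by auto
qed

interpretation fun_vs: vector_space "\<lambda>(a::real) (f::nat\<Rightarrow>real). (\<lambda>r. a * f r)"
  by unfold_locales (auto simp: fun_eq_iff algebra_simps)

definition column :: "nat \<Rightarrow> (nat \<Rightarrow> int \<Rightarrow> real) \<Rightarrow> int \<Rightarrow> nat \<Rightarrow> real" where
  "column k A j = (\<lambda>r. if r < k then A r j else 0)"

lemma sum_fun_apply: "(\<Sum>j\<in>T. g j) r = (\<Sum>j\<in>T. g j r)"
  by (induction T rule: infinite_finite_induct) auto

lemma sum_scaled_columns_eq_0_iff: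
  "(\<Sum>j\<in>T. (\<lambda>r. c j * column k A j r)) = 0 \<longleftrightarrow> (\<forall>r<k. (\<Sum>j\<in>T. c j * A r j) = 0)"
proof -
  have "(\<Sum>j\<in>T. (\<lambda>r. c j * column k A j r)) r = (if r < k then (\<Sum>j\<in>T. c j * A r j) else 0)" for r
    by (simp add: sum_fun_apply column_def)
  then show ?thesis by (auto simp: fun_eq_iff)
qed

lemma col_indep_iff_independent:
  "col_indep k A T \<longleftrightarrow> finite T \<and> inj_on (column k A) T \<and> fun_vs.independent (column k A ` T)"
proof (intro iffI conjI)
  assume indep: "col_indep k A T"
  then show fin: "finite T" by (simp add: col_indep_def)
  show inj: "inj_on (column k A) T"
  proof (rule inj_onI, rule ccontr)
    fix x y assume xy: "x \<in> T" "y \<in> T" "column k A x = column k A y" "x \<noteq> y"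
    define c where "c = (\<lambda>j. if j = x then (1::real) else if j = y then -1 else 0)"
    have "(\<Sum>j\<in>T. c j * A r j) = 0" if "r < k" for r
    proof -
      have "A r x = A r y" using fun_cong[OF xy(3), of r] that by (simp add: column_def)
      have "(\<Sum>j\<in>T. c j * A r j) = (\<Sum>j\<in>{x,y}. c j * A r j)"
        using fin xy by (intro sum.mono_neutral_right) (auto simp: c_def)
      also have "\<dots> = 0" using xy \<open>A r x = A r y\<close> by (simp add: c_def)
      finally show ?thesis .
    qed
    then have "c x = 0" using indep xy by (auto simp: col_indep_def)
    then show False by (simp add: c_def)
  qed
  show "fun_vs.independent (column k A ` T)"
  proof
    assume "fun_vs.dependent (column k A ` T)"
    then obtain u where u: "\<exists>v\<in>column k A ` T. u v \<noteq> 0"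
      "(\<Sum>v\<in>column k A ` T. (\<lambda>r. u v * v r)) = 0"
      using fun_vs.dependent_finite[of "column k A ` T"] fin by auto
    have "(\<Sum>j\<in>T. (\<lambda>r. u (column k A j) * column k A j r)) = 0"
      using u(2) by (simp add: sum.reindex[OF inj])
    then have "\<forall>j\<in>T. u (column k A j) = 0"
      using indep by (auto simp: col_indep_def sum_scaled_columns_eq_0_iff)
    then show False using u(1) by auto
  qed
next
  assume "finite T \<and> inj_on (column k A) T \<and> fun_vs.independent (column k A ` T)"
  then have fin: "finite T" and inj: "inj_on (column k A) T"
    and indep: "fun_vs.independent (column k A ` T)" by auto
  show "col_indep k A T"
    unfolding col_indep_def
  proof (intro conjI fin allI impI)
    fix c assume "\<forall>r<k. (\<Sum>j\<in>T. c j * A r j) = 0"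
    define u where "u = (\<lambda>v. c (the_inv_into T (column k A) v))"
    have "(\<Sum>j\<in>T. (\<lambda>r. c j * column k A j r)) = 0"
      using \<open>\<forall>r<k. _\<close> sum_scaled_columns_eq_0_iff by blast
    then have "(\<Sum>v\<in>column k A ` T. (\<lambda>r. u v * v r)) = 0"
      by (simp add: sum.reindex[OF inj] u_def the_inv_into_f_f[OF inj])
    then have "\<forall>v\<in>column k A ` T. u v = 0"
      using fun_vs.dependent_finite[of "column k A ` T"] fin indep by auto
    then show "\<forall>j\<in>T. c j = 0" by (auto simp: u_def the_inv_into_f_f[OF inj])
  qed
qed

lemma mat_rank_eq_dim:
  assumes "finite S"
  shows "mat_rank k A S = fun_vs.dim (column k A ` S)"
  unfolding mat_rank_def
proof (rule Max_eqI)
  have "{card T |T. T \<subseteq> S \<and> col_indep k A T} \<subseteq> card ` Pow S" by auto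
  then show "finite {card T |T. T \<subseteq> S \<and> col_indep k A T}"
    using assms finite_subset by blast
  obtain B where B: "B \<subseteq> column k A ` S" "fun_vs.independent B" "column k A ` S \<subseteq> fun_vs.span B"
    "card B = fun_vs.dim (column k A ` S)"
    by (rule fun_vs.basis_exists)
  have finB: "finite B" using B(1) assms finite_subset by blast
  show "m \<le> fun_vs.dim (column k A ` S)" if m: "m \<in> {card T |T. T \<subseteq> S \<and> col_indep k A T}" for m
  proof -
    obtain T where T: "m = card T" "T \<subseteq> S" "col_indep k A T" using m by blast
    then have "inj_on (column k A) T" "fun_vs.independent (column k A ` T)"
      by (auto simp: col_indep_iff_independent)
    moreover have "column k A ` T \<subseteq> fun_vs.span B" using T(2) B(3) by blast
    ultimately have "card (column k A ` T) \<le> card B"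
      using fun_vs.independent_span_bound[OF finB] by blast
    then show ?thesis using T(1) B(4) card_image[OF \<open>inj_on (column k A) T\<close>] by simp
  qed
  obtain T where T: "T \<subseteq> S" "column k A ` T = B" "inj_on (column k A) T"
    using subset_image_inj[of B "column k A" S] B(1) by blast
  then have "col_indep k A T"
    using B(2) assms finite_subset by (auto simp: col_indep_iff_independent)
  then show "fun_vs.dim (column k A ` S) \<in> {card T |T. T \<subseteq> S \<and> col_indep k A T}"
    using T B(4) card_image[OF T(3)] by (metis (mono_tags, lifting) mem_Collect_eq)
qed

lemma mat_rank_second_difference:
  fixes k :: nat and A :: "nat \<Rightarrow> int \<Rightarrow> real" and e f :: int
  assumes "finite X"
  defines "r \<equiv> mat_rank k A X" and "re \<equiv> mat_rank k A (insert e X)"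
    and "rf \<equiv> mat_rank k A (insert f X)" and "ref \<equiv> mat_rank k A (insert e (insert f X))"
  shows "int re + int rf - int ref - int r = (if ref = re \<and> re = rf \<and> rf \<noteq> r then 1 else 0)"
  using fun_vs.dim_insert_second_difference[of "column k A ` X" "column k A e" "column k A f"] assms
  by (simp add: mat_rank_eq_dim)

lemma mat_rank_singleton_le: "mat_rank k A {e} \<le> 1"
  using fun_vs.dim_insert_finite[of "{}" "column k A e"]
  by (simp add: mat_rank_eq_dim fun_vs.dim_eq_card_independent[OF fun_vs.independent_empty])

lemma mat_rank_empty: "mat_rank k A {} = 0"
  by (simp add: mat_rank_eq_dim fun_vs.dim_eq_card_independent[OF fun_vs.independent_empty])

section \<open>Cyclic intervals\<close>

definition cyc_rep :: "nat \<Rightarrow> int \<Rightarrow> int" where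
  "cyc_rep n m = (m - 1) mod int n + 1"

lemma cyc_int_eq_image: "cyc_int n i j = cyc_rep n ` {i..j}"
  unfolding cyc_int_def cyc_rep_def by auto

lemma cyc_int_empty: "j < i \<Longrightarrow> cyc_int n i j = {}"
  by (simp add: cyc_int_eq_image)

lemma cyc_int_insert_left: "i \<le> j \<Longrightarrow> cyc_int n i j = insert (cyc_rep n i) (cyc_int n (i + 1) j)"
proof -
  assume "i \<le> j"
  then have "{i..j} = insert i {i + 1..j}" by auto
  then show ?thesis by (simp add: cyc_int_eq_image)
qed

lemma cyc_int_insert_right: "i \<le> j \<Longrightarrow> cyc_int n i j = insert (cyc_rep n j) (cyc_int n i (j - 1))"
proof -
  assume "i \<le> j"
  then have "{i..j} = insert j {i..j - 1}" by auto
  then show ?thesis by (simp add: cyc_int_eq_image)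
qed

lemma cyc_rep_in_ground: "0 < n \<Longrightarrow> cyc_rep n m \<in> ground n"
  using pos_mod_bound[of "int n" "m - 1"] pos_mod_sign[of "int n" "m - 1"]
  by (simp add: cyc_rep_def ground_def add1_zle_eq)

lemma cyc_int_subset_ground: "0 < n \<Longrightarrow> cyc_int n i j \<subseteq> ground n"
  using cyc_rep_in_ground by (auto simp: cyc_int_eq_image)

lemma cyc_rep_eq_iff: "cyc_rep n x = cyc_rep n y \<longleftrightarrow> int n dvd x - y"
  unfolding cyc_rep_def using mod_eq_dvd_iff[of "x - 1" "int n" "y - 1"] by simp

lemma inj_on_cyc_rep: "b - a < int n \<Longrightarrow> inj_on (cyc_rep n) {a..b}"
proof (rule inj_onI)
  fix x y assume "b - a < int n" "x \<in> {a..b}" "y \<in> {a..b}" "cyc_rep n x = cyc_rep n y"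
  then have "int n dvd x - y" "\<bar>x - y\<bar> < int n" by (auto simp: cyc_rep_eq_iff)
  then show "x = y" using dvd_imp_le_int[of "x - y" "int n"] by (cases "x - y = 0") auto
qed

lemma card_cyc_int: "i \<le> j \<Longrightarrow> j - i + 1 < int n \<Longrightarrow> int (card (cyc_int n i j)) = j - i + 1"
  using card_image[OF inj_on_cyc_rep, of j i n] by (simp add: cyc_int_eq_image)

lemma cyc_int_eq_ground:
  assumes "0 < n" "int n \<le> j - i + 1"
  shows "cyc_int n i j = ground n"
proof
  show "cyc_int n i j \<subseteq> ground n" using cyc_int_subset_ground assms(1) .
  show "ground n \<subseteq> cyc_int n i j"
  proof
    fix g assume g: "g \<in> ground n"
    define m where "m = i + (g - i) mod int n"
    have "(g - i) mod int n < int n" "0 \<le> (g - i) mod int n" using assms(1) by simp_all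
    then have "m \<in> {i..j}" using assms(2) unfolding m_def by simp
    moreover have "m - g = - (int n * ((g - i) div int n))"
      unfolding m_def by (simp add: minus_mod_eq_mult_div [symmetric])
    then have "cyc_rep n m = cyc_rep n g" unfolding cyc_rep_eq_iff by simp
    moreover have "cyc_rep n g = g"
      using g mod_pos_pos_trivial[of "g - 1" "int n"] by (simp add: cyc_rep_def ground_def)
    ultimately show "g \<in> cyc_int n i j" unfolding cyc_int_eq_image by (metis image_eqI)
  qed
qed

lemma cyc_int_shift: "int n dvd d \<Longrightarrow> cyc_int n (p + d) (q + d) = cyc_int n p q"
proof -
  assume "int n dvd d"
  then have "cyc_rep n (m + d) = cyc_rep n m" for m by (simp add: cyc_rep_eq_iff)
  moreover have "{p + d..q + d} = (\<lambda>m. m + d) ` {p..q}" by simp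
  ultimately show ?thesis by (simp only: cyc_int_eq_image image_image)
qed

lemma cyc_int_eq_iff:
  assumes "b - a < int n" "a \<le> x" "x \<le> y" "y \<le> b" "a \<le> x'" "x' \<le> y'" "y' \<le> b"
  shows "cyc_int n x y = cyc_int n x' y' \<longleftrightarrow> x = x' \<and> y = y'"
proof -
  have "{x..y} \<subseteq> {a..b}" "{x'..y'} \<subseteq> {a..b}" using assms by auto
  then have "cyc_int n x y = cyc_int n x' y' \<longleftrightarrow> {x..y} = {x'..y'}"
    unfolding cyc_int_eq_image using inj_on_image_eq_iff[OF inj_on_cyc_rep[OF assms(1)]] by blast
  then show ?thesis using assms by simp
qed

lemma cyc_int_subset_short:
  assumes "b - a + 1 < int n" "p \<le> q" "cyc_int n p q \<subseteq> cyc_int n a b"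
  shows "\<exists>x. a \<le> x \<and> x + (q - p) \<le> b \<and> cyc_int n p q = cyc_int n x (x + (q - p))"
proof -
  have "cyc_rep n p \<in> cyc_rep n ` {a..b}"
    using assms(2,3) by (auto simp: cyc_int_eq_image)
  then obtain x where "x \<in> {a..b}" "cyc_rep n x = cyc_rep n p" by auto
  then have x: "x \<in> {a..b}" "int n dvd x - p" by (simp_all add: cyc_rep_eq_iff)
  have shifted: "cyc_int n p q = cyc_int n x (x + (q - p))"
    using cyc_int_shift[OF x(2), of p q] by (simp add: algebra_simps)
  have "x + (q - p) \<le> b"
  proof (rule ccontr)
    assume "\<not> x + (q - p) \<le> b"
    then have "cyc_rep n (b + 1) \<in> cyc_int n p q"
      using x(1) shifted by (auto simp: cyc_int_eq_image)
    then obtain y where y: "y \<in> {a..b}" "int n dvd b + 1 - y"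
      using assms(3) by (auto simp: cyc_int_eq_image cyc_rep_eq_iff)
    then have "int n \<le> b + 1 - y" using zdvd_imp_le by force
    then show False using y(1) assms(1) by simp
  qed
  then show ?thesis using x(1) shifted by auto
qed

lemma proper_subintervals:
  assumes "a \<le> b" "b - a + 1 < int n"
  shows "{T \<in> cyc_intervals n. T \<subset> cyc_int n a b}
     = insert {} ((\<lambda>(x, y). cyc_int n x y) ` (Sigma {a..b} (\<lambda>x. {x..b}) - {(a, b)}))"
    (is "?L = insert {} ?R")
proof (intro equalityI subsetI)
  fix T assume T: "T \<in> ?L"
  then obtain p q where pq: "T = cyc_int n p q" unfolding cyc_intervals_def by blast
  show "T \<in> insert {} ?R"
  proof (cases "p \<le> q")
    case True
    then obtain x where x: "a \<le> x" "x + (q - p) \<le> b" "T = cyc_int n x (x + (q - p))"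
      using cyc_int_subset_short[OF assms(2) True] T pq by blast
    moreover have "(x, x + (q - p)) \<noteq> (a, b)" using T x(3) by auto
    ultimately have "(x, x + (q - p)) \<in> Sigma {a..b} (\<lambda>x. {x..b}) - {(a, b)}" using True by auto
    then show ?thesis using x(3) by (intro insertI2 rev_image_eqI[of "(x, x + (q - p))"]) simp_all
  qed (simp add: pq cyc_int_empty)
next
  fix T assume "T \<in> insert {} ?R"
  then consider "T = {}"
    | x y where "(x, y) \<in> Sigma {a..b} (\<lambda>x. {x..b}) - {(a, b)}" "T = cyc_int n x y"
    by blast
  then show "T \<in> ?L"
  proof cases
    case 1
    then have "T = cyc_int n 1 0" by (simp add: cyc_int_empty)
    moreover have "cyc_int n a b \<noteq> {}" using assms(1) by (simp add: cyc_int_eq_image)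
    ultimately show ?thesis using 1 unfolding cyc_intervals_def by blast
  next
    case (2 x y)
    then have "T \<subseteq> cyc_int n a b" by (auto simp: cyc_int_eq_image)
    moreover have "T \<noteq> cyc_int n a b" using 2 cyc_int_eq_iff[of b a n x y a b] assms by auto
    ultimately show ?thesis using 2 unfolding cyc_intervals_def by blast
  qed
qed

section \<open>Moebius inversion over cyclic intervals\<close>

lemma sum_Icc_telescope:
  fixes h :: "int \<Rightarrow> 'a::ab_group_add"
  assumes "a - 1 \<le> b"
  shows "(\<Sum>y\<in>{a..b}. h y - h (y - 1)) = h b - h (a - 1)"
  using assms
proof (induction b rule: int_ge_induct)
  case (step b)
  have "{a..b + 1} = insert (b + 1) {a..b}" using step.hyps by auto
  then show ?case using step by simp
qed simp

lemma sum_subintervals_second_difference: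
  fixes G :: "int \<Rightarrow> int \<Rightarrow> 'a::ab_group_add"
  assumes G_empty: "\<And>x y. y < x \<Longrightarrow> G x y = 0" and "a - 1 \<le> b"
  shows "(\<Sum>(x, y)\<in>Sigma {a..b} (\<lambda>x. {x..b}). G x y - G (x + 1) y - G x (y - 1) + G (x + 1) (y - 1))
    = G a b"
proof -
  have inner: "(\<Sum>y\<in>{x..b}. G x y - G (x + 1) y - G x (y - 1) + G (x + 1) (y - 1))
      = G x b - G (x + 1) b" if "x \<in> {a..b}" for x
    using sum_Icc_telescope[of x b "\<lambda>y. G x y - G (x + 1) y"] that G_empty[of "x - 1"]
    by (simp add: algebra_simps)
  have "(\<Sum>(x, y)\<in>Sigma {a..b} (\<lambda>x. {x..b}). G x y - G (x + 1) y - G x (y - 1) + G (x + 1) (y - 1))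
      = (\<Sum>x\<in>{a..b}. G x b - G (x + 1) b)"
    by (simp add: sum.Sigma[symmetric] inner)
  also have "\<dots> = G a b"
    using sum_Icc_telescope[OF assms(2), of "\<lambda>x. - G (x + 1) b"] G_empty[of b "b + 1"] by simp
  finally show ?thesis .
qed

definition cyc_second_diff :: "nat \<Rightarrow> (int set \<Rightarrow> int) \<Rightarrow> int \<Rightarrow> int \<Rightarrow> int" where
  "cyc_second_diff n c i j =
     c (cyc_int n i j) - c (cyc_int n (i + 1) j) - c (cyc_int n i (j - 1)) + c (cyc_int n (i + 1) (j - 1))"

lemma a_coef_cyc_int:
  assumes c_empty: "c {} = 0"
  shows "i \<le> j \<Longrightarrow> j - i + 1 < int n \<Longrightarrow>
    a_coef (cyc_intervals n) c (cyc_int n i j) = cyc_second_diff n c i j"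
proof (induction "nat (j - i)" arbitrary: i j rule: less_induct)
  case less
  let ?I = "cyc_intervals n"
  define Q where "Q = Sigma {i..j} (\<lambda>x. {x..j}) - {(i, j)}"
  define g where "g = (\<lambda>(x, y). cyc_int n x y)"
  have inj: "inj_on g Q"
    using cyc_int_eq_iff[of j i n] less.prems by (intro inj_onI) (auto simp: Q_def g_def)
  have IH: "a_coef ?I c (g p) = cyc_second_diff n c (fst p) (snd p)" if pQ: "p \<in> Q" for p
  proof -
    obtain x y where p: "p = (x, y)" "i \<le> x" "x \<le> y" "y \<le> j" "(x, y) \<noteq> (i, j)"
      using pQ unfolding Q_def by (cases p) auto
    then have "nat (y - x) < nat (j - i)" "y - x + 1 < int n" using less.prems by auto
    then show ?thesis using less.hyps[of y x] p by (simp add: g_def del: a_coef.simps)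
  qed
  have "(\<Sum>T\<in>{T \<in> ?I. T \<subset> cyc_int n i j}. a_coef ?I c T) = (\<Sum>T\<in>g ` Q. a_coef ?I c T)"
    unfolding proper_subintervals[OF less.prems] g_def[symmetric] Q_def[symmetric]
    by (subst sum.insert_if) (auto simp: Q_def)
  also have "\<dots> = (\<Sum>p\<in>Q. cyc_second_diff n c (fst p) (snd p))"
    by (simp add: sum.reindex[OF inj] IH del: a_coef.simps)
  also have "\<dots> = (\<Sum>p\<in>Sigma {i..j} (\<lambda>x. {x..j}). cyc_second_diff n c (fst p) (snd p))
      - cyc_second_diff n c i j"
    unfolding Q_def using less.prems by (subst sum_diff1) auto
  also have "(\<Sum>p\<in>Sigma {i..j} (\<lambda>x. {x..j}). cyc_second_diff n c (fst p) (snd p)) = c (cyc_int n i j)"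
    using sum_subintervals_second_difference[of "\<lambda>x y. c (cyc_int n x y)" i j] less.prems
    by (simp add: cyc_second_diff_def case_prod_beta c_empty cyc_int_empty)
  finally have "(\<Sum>T\<in>{T \<in> ?I. T \<subset> cyc_int n i j}. a_coef ?I c T)
      = c (cyc_int n i j) - cyc_second_diff n c i j" .
  moreover have "cyc_int n i j \<noteq> {}" "finite (cyc_int n i j)"
    using less.prems by (auto simp: cyc_int_eq_image)
  ultimately show ?case by (subst a_coef.simps) simp
qed

section \<open>The affine permutation matrix\<close>

lemma positroid_rank_empty: "is_positroid n rk \<Longrightarrow> rk {} = 0"
  by (auto simp: is_positroid_def mat_rank_empty)

lemma cyc_rank_matrix_eq_rank:
  "rk {} = 0 \<Longrightarrow> i \<le> j + 1 \<Longrightarrow> cyc_rank_matrix n rk i j = int (rk (cyc_int n i j))"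
  by (cases "i \<le> j") (simp_all add: cyc_rank_matrix_def cyc_int_empty)

text \<open>The convention r(i,j) = j - i + 1 for j < i makes this hold for empty intervals too.\<close>

lemma cyc_nullity_eq:
  assumes "rk {} = 0" "j - i + 1 < int n"
  shows "int (card (cyc_int n i j)) - int (rk (cyc_int n i j)) = (j - i + 1) - cyc_rank_matrix n rk i j"
  using assms card_cyc_int[of i j n]
  by (cases "i \<le> j") (simp_all add: cyc_rank_matrix_def cyc_int_empty)

lemma aff_perm_entry_eq_rank_second_diff:
  assumes "0 < n" "is_positroid n rk" "i \<le> j"
  shows "aff_perm_entry n rk i j = cyc_rank_matrix n rk (i + 1) j + cyc_rank_matrix n rk i (j - 1)
    - cyc_rank_matrix n rk i j - cyc_rank_matrix n rk (i + 1) (j - 1)"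
proof -
  obtain k A where kA: "\<And>S. S \<subseteq> ground n \<Longrightarrow> rk S = mat_rank k A S"
    using assms(2) unfolding is_positroid_def by blast
  have rk_empty: "rk {} = 0" using positroid_rank_empty[OF assms(2)] .
  show ?thesis
  proof (cases "i = j")
    case True
    have "rk (cyc_int n i i) \<le> 1"
      using kA cyc_rep_in_ground[OF assms(1)] mat_rank_singleton_le by (simp add: cyc_int_eq_image)
    then show ?thesis
      using True by (auto simp: aff_perm_entry_def cyc_rank_matrix_def)
  next
    case False
    define X where "X = cyc_int n (i + 1) (j - 1)"
    have "cyc_int n i j = insert (cyc_rep n i) (insert (cyc_rep n j) X)"
      "cyc_int n i (j - 1) = insert (cyc_rep n i) X" "cyc_int n (i + 1) j = insert (cyc_rep n j) X"
      using False assms(3) cyc_int_insert_left cyc_int_insert_right unfolding X_def by auto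
    moreover have "finite X" "X \<subseteq> ground n"
      unfolding X_def using cyc_int_subset_ground[OF assms(1)] by (simp_all add: cyc_int_eq_image)
    ultimately show ?thesis
      using False assms(3) mat_rank_second_difference[of X k A "cyc_rep n i" "cyc_rep n j"]
      by (simp add: aff_perm_entry_def Let_def cyc_rank_matrix_eq_rank[where rk = rk, OF rk_empty]
          kA cyc_rep_in_ground[OF assms(1)] X_def)
  qed
qed

theorem lemma6p14:
  fixes n :: nat and rk :: "int set \<Rightarrow> nat" and i j :: int
  assumes "0 < n"
    and "is_positroid n rk"
    and "i \<le> j"
    and "cyc_int n i j \<noteq> ground n"
  shows "a_coef (cyc_intervals n) (\<lambda>S. int (card S) - int (rk S)) (cyc_int n i j)
           = aff_perm_entry n rk i j"
proof -
  have rk_empty: "rk {} = 0" using positroid_rank_empty[OF assms(2)] .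
  have short: "j - i + 1 < int n"
    using cyc_int_eq_ground[OF assms(1)] assms(4) by force
  have "a_coef (cyc_intervals n) (\<lambda>S. int (card S) - int (rk S)) (cyc_int n i j)
      = cyc_second_diff n (\<lambda>S. int (card S) - int (rk S)) i j"
    using rk_empty assms(3) short by (intro a_coef_cyc_int) simp_all
  also have "\<dots> = aff_perm_entry n rk i j"
    using cyc_nullity_eq[where rk = rk, OF rk_empty] short
    by (simp add: cyc_second_diff_def aff_perm_entry_eq_rank_second_diff[OF assms(1-3)])
  finally show ?thesis .
qed

end
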